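(* Assume the standing hypothesis (H) below and let $K>0$. Then there exists $m_K>0$ such that for all $w,w'\in W$ with $\max\{|w|_W,|w'|_W\}\le K$ and $|w-w'|_W<m_K$, and all $x\in Z(w)$, $x'\in Z(w')$, $$\big|\mathrm{dist}(x,\partial Z(w))-\mathrm{dist}(x',\partial Z(w'))\big|\le|x-x'|+d_H(Z(w),Z(w')).$$
   Context: $X$ is a real Hilbert space with inner product $\langle\cdot,\cdot\rangle$ and norm $|x|=\sqrt{\langle x,x\rangle}$; $W$ is a real Banach space with norm $|\cdot|_W$. $G:X\times W\to[0,\infty)$ is locally Lipschitz continuous and $Z(w):=\{x\in X: G(x,w)\le 1\}$; $\partial Z(w)$ is its boundary, $\mathrm{dist}(x,S)=\inf_{s\in S}|x-s|$, and $d_H(A,B)=\max\{\sup_{z\in A}\mathrm{dist}(z,B),\sup_{z'\in B}\mathrm{dist}(z',A)\}$ is the Hausdorff distance. The partial gradient $\nabla_xG(x,w)\in X$ is defined by $\langle\nabla_xG(x,w),y\rangle=\lim_{t\to0}\frac1t(G(x+ty,w)-G(x,w))$ for all $y\in X$. (H): $\nabla_xG(x,w)$ exists for all $(x,w)$; there are positive constants $\lambda,c,L$ and functions $\mu_1:W\times[0,\infty)\to[0,\infty)$, $\mu_2:[0,\infty)\to[0,\infty)$ with $\mu_1(w,0)=\mu_2(0)=0$, $\lim_{s\to\infty}\mu_1(w,s)=\lim_{s\to\infty}\mu_2(s)=\infty$ for every $w$, such that for all $x,y,z\in X$, $w,w'\in W$: (i) $G(x,w)=1\Rightarrow|\nabla_xG(x,w)|\ge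 c$; (ii) $|\nabla_xG(x,w)-\nabla_xG(y,w)|\le\mu_1(w,|x-y|)$ if $x,y\in Z(w)$; (iii) $\langle\nabla_xG(x,w)-\nabla_xG(z,w),x-z\rangle\ge-\lambda|x-z|^2$ if $x\in\partial Z(w)$, $z\in Z(w)$; (iv) $|G(x,w)-G(x,w')|\le L|w-w'|_W$; (v) for $\rho>0$, $\mathrm{dist}(x,Z(w))\ge\rho\Rightarrow G(x,w)-1\ge\mu_2(\rho)$. *)

theory Defs
  imports "HOL-Analysis.Analysis"
begin

(* Hausdorff distance d_H(A,B), valued in the extended reals (it may be +infinity
   for unbounded sets).  dist(z,B) is the library's infdist z B. *)
definition hausdorff_dist :: "'a::metric_space set \<Rightarrow> 'a set \<Rightarrow> ereal" where
  "hausdorff_dist A B =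
     max (SUP z\<in>A. ereal (infdist z B)) (SUP z\<in>B. ereal (infdist z A))"

definition locally_lipschitz :: "('a::metric_space \<Rightarrow> real) \<Rightarrow> bool" where
  "locally_lipschitz f \<longleftrightarrow> (\<forall>p. \<exists>e>0. \<exists>C. C-lipschitz_on (ball p e) f)"

definition Zset :: "('x \<times> 'w \<Rightarrow> real) \<Rightarrow> 'w \<Rightarrow> 'x set" where
  "Zset G w = {x. G (x, w) \<le> 1}"

end

theory Submission
  imports Defs
begin

(*
  Fix w, w' with |w - w'| < c^2 / (8 lam L), write h for d_H(Z(w), Z(w')), and let x be in Z(w) and
  y' on the boundary of Z(w'). It suffices to show dist(x, bd Z(w)) <= |x - y'| + h: taking the
  infimum over y' and using the triangle inequality gives one half of the claim, and the other half
  is symmetric. Otherwise the ball of radius s = dist(x, bd Z(w)) - |x - y'| > h around y' lies in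
  the interior of Z(w), and two facts rule this out.

  First, Ekeland's variational principle, applied along the segment from w' to w with the help of
  (i) and (iv), yields a point v with G(v, w) >= 1 and |v - y'| <= 4 L |w - w'| / c < c / (2 lam);
  hence s < c / (2 lam).

  Second, the semiconvexity (iii) gives Z(w') exterior balls of radius c / (2 lam): for
  0 <= t <= c / (2 lam) the point y' + t grad G(y', w') / |grad G(y', w')| has distance at least t
  from Z(w'). For h < t < s this point lies in Z(w) but farther than h from Z(w').

  Only (i), (iii), (iv) and the continuity of G are used; m_K does not depend on K.
*)

section \<open>Ekeland's variational principle\<close>

definition ekeland_cone :: "('a::metric_space \<Rightarrow> real) \<Rightarrow> real \<Rightarrow> 'a set \<Rightarrow> 'a \<Rightarrow> 'a set" where
  "ekeland_cone f e A x = {y \<in> A. f y + e * dist x y \<le> f x}"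

lemma ekeland_cone_refl: "x \<in> A \<Longrightarrow> x \<in> ekeland_cone f e A x"
  by (simp add: ekeland_cone_def)

lemma ekeland_cone_trans:
  assumes "0 \<le> e" "y \<in> ekeland_cone f e A x" "z \<in> ekeland_cone f e A y"
  shows "z \<in> ekeland_cone f e A x"
proof -
  have "e * dist x z \<le> e * dist x y + e * dist y z"
    using assms(1) dist_triangle[of x z y] by (simp add: distrib_left[symmetric] mult_left_mono)
  then show ?thesis
    using assms(2,3) by (auto simp: ekeland_cone_def)
qed

lemma closed_ekeland_cone:
  assumes "closed A" "continuous_on A f"
  shows "closed (ekeland_cone f e A x)"
  unfolding ekeland_cone_def using assms
  by (intro continuous_on_closed_Collect_le continuous_intros) auto

lemma ekeland_cone_dist_le:
  assumes "bdd_below (f ` A)" "0 \<le> e" "y \<in> ekeland_cone f e A x" "z \<in> ekeland_cone f e A y"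
    and "f y < Inf (f ` ekeland_cone f e A x) + \<delta>"
  shows "e * dist y z \<le> \<delta>"
proof -
  have "bdd_below (f ` ekeland_cone f e A x)"
    using assms(1) by (rule bdd_below_mono) (auto simp: ekeland_cone_def)
  then have "Inf (f ` ekeland_cone f e A x) \<le> f z"
    using ekeland_cone_trans[OF assms(2-4)] by (auto intro: cInf_lower)
  then show ?thesis
    using assms(4,5) by (simp add: ekeland_cone_def)
qed

lemma ekeland_cone_minimizing_sequence:
  assumes "bdd_below (f ` A)" "0 \<le> e" "x0 \<in> A"
  obtains X where "\<And>n. X n \<in> ekeland_cone f e A x0"
    and "\<And>n. X (Suc n) \<in> ekeland_cone f e A (X n)"
    and "\<And>n. f (X (Suc n)) < Inf (f ` ekeland_cone f e A (X n)) + 1 / Suc n"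
proof -
  define S where "S = ekeland_cone f e A"
  have step: "\<exists>y. y \<in> S x0 \<and> y \<in> S x \<and> f y < Inf (f ` S x) + 1 / Suc n" if "x \<in> S x0" for x n
  proof -
    have "bdd_below (f ` S x)"
      using assms(1) by (rule bdd_below_mono) (auto simp: S_def ekeland_cone_def)
    moreover have "x \<in> S x"
      using that by (simp add: S_def ekeland_cone_def)
    ultimately obtain y where "y \<in> S x" "f y < Inf (f ` S x) + 1 / Suc n"
      using cInf_less_iff[of "f ` S x" "Inf (f ` S x) + 1 / Suc n"] by force
    then show ?thesis
      using ekeland_cone_trans[OF assms(2), of x f A x0 y] that by (auto simp: S_def)
  qed
  have "x0 \<in> S x0"
    using assms(3) by (simp add: S_def ekeland_cone_refl)
  have "\<exists>X. \<forall>n. X n \<in> S x0 \<and> X (Suc n) \<in> S (X n) \<and> f (X (Suc n)) < Inf (f ` S (X n)) + 1 / Suc n"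
    by (rule dependent_nat_choice[where P = "\<lambda>_ x. x \<in> S x0"
          and Q = "\<lambda>n x y. y \<in> S x \<and> f y < Inf (f ` S x) + 1 / Suc n"])
      (use step \<open>x0 \<in> S x0\<close> in blast)+
  then show thesis
    using that by (auto simp: S_def)
qed

lemma ekeland_cone_nested_sequence:
  assumes "bdd_below (f ` A)" "0 < e" "x0 \<in> A"
  obtains X where "\<And>n. X n \<in> ekeland_cone f e A x0"
    and "\<And>n. X (Suc n) \<in> ekeland_cone f e A (X n)"
    and "\<And>\<epsilon>. 0 < \<epsilon> \<Longrightarrow> \<exists>n. \<forall>y\<in>ekeland_cone f e A (X n). \<forall>z\<in>ekeland_cone f e A (X n). dist y z < \<epsilon>"
proof -
  define S where "S = ekeland_cone f e A"
  obtain X where X_in: "\<And>n. X n \<in> S x0" and X_Suc: "\<And>n. X (Suc n) \<in> S (X n)"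
    and X_almost_min: "\<And>n. f (X (Suc n)) < Inf (f ` S (X n)) + 1 / Suc n"
    using ekeland_cone_minimizing_sequence[OF assms(1) less_imp_le[OF assms(2)] assms(3)]
    unfolding S_def by blast
  have dist_le: "e * dist (X (Suc n)) z \<le> 1 / Suc n" if "z \<in> S (X (Suc n))" for n z
    using ekeland_cone_dist_le[OF assms(1) less_imp_le[OF assms(2)], of "X (Suc n)" "X n" z "1 / Suc n"]
      X_Suc[of n] X_almost_min[of n] that by (simp add: S_def)
  have "\<exists>n. \<forall>y\<in>S (X n). \<forall>z\<in>S (X n). dist y z < \<epsilon>" if "\<epsilon> > 0" for \<epsilon>
  proof -
    have "0 < e * \<epsilon> / 2"
      using assms(2) that by simp
    then obtain N where N: "inverse (real (Suc N)) < e * \<epsilon> / 2"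
      using reals_Archimedean by blast
    have "e * dist y z < e * \<epsilon>" if "y \<in> S (X (Suc N))" "z \<in> S (X (Suc N))" for y z
    proof -
      have "e * dist y z \<le> e * dist (X (Suc N)) y + e * dist (X (Suc N)) z"
        using dist_triangle3[of y z "X (Suc N)"] assms(2) by (simp add: distrib_left[symmetric])
      also have "\<dots> < e * \<epsilon>"
        using dist_le[OF that(1)] dist_le[OF that(2)] N unfolding inverse_eq_divide by linarith
      finally show ?thesis .
    qed
    then show ?thesis
      using assms(2) by (intro exI[of _ "Suc N"]) simp
  qed
  with X_in X_Suc show thesis
    by (rule that[unfolded S_def[symmetric]])
qed

lemma ekeland_variational_principle:
  fixes f :: "'a::complete_space \<Rightarrow> real"
  assumes A: "closed A" "x0 \<in> A" and f: "continuous_on A f" "bdd_below (f ` A)"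
    and e: "e > 0"
  obtains x where "x \<in> A" "f x \<le> f x0" "\<And>y. y \<in> A \<Longrightarrow> y \<noteq> x \<Longrightarrow> f x - e * dist x y < f y"
proof -
  define S where "S = ekeland_cone f e A"
  obtain X where X_in: "\<And>n. X n \<in> S x0" and X_Suc: "\<And>n. X (Suc n) \<in> S (X n)"
    and shrinking: "\<And>\<epsilon>. 0 < \<epsilon> \<Longrightarrow> \<exists>n. \<forall>y\<in>S (X n). \<forall>z\<in>S (X n). dist y z < \<epsilon>"
    using ekeland_cone_nested_sequence[OF f(2) e A(2)] unfolding S_def by blast
  have S_trans: "z \<in> S x" if "y \<in> S x" "z \<in> S y" for x y z
    using ekeland_cone_trans[of e] e that by (simp add: S_def)
  have "S (X n) \<subseteq> S (X m)" if "m \<le> n" for m n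
    using lift_Suc_antimono_le[of "\<lambda>n. S (X n)", OF _ that] S_trans X_Suc by blast
  moreover have "closed (S x)" "x \<in> A \<Longrightarrow> S x \<noteq> {}" for x
    using closed_ekeland_cone[OF A(1) f(1)] ekeland_cone_refl[of x A f e] by (auto simp: S_def)
  moreover have "X n \<in> A" for n
    using X_in by (simp add: S_def ekeland_cone_def)
  ultimately obtain a where a: "(\<Inter>n. S (X n)) = {a}"
    using decreasing_closed_nest_sing[of "\<lambda>n. S (X n)"] shrinking by meson
  then have "a \<in> S x0"
    using S_trans[OF X_in[of 0]] by blast
  then have a_in: "a \<in> A" and "f a + e * dist x0 a \<le> f x0"
    by (simp_all add: S_def ekeland_cone_def)
  moreover have "0 \<le> e * dist x0 a"
    using e by simp
  ultimately have "f a \<le> f x0"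
    by linarith
  moreover have "f a - e * dist a y < f y" if "y \<in> A" "y \<noteq> a" for y
  proof (rule ccontr)
    assume "\<not> ?thesis"
    then have "y \<in> S a"
      using that by (simp add: S_def ekeland_cone_def)
    then have "y \<in> (\<Inter>n. S (X n))"
      using S_trans a by blast
    then show False
      using a that(2) by blast
  qed
  ultimately show thesis
    using a_in that by blast
qed

lemma ekeland_descent:
  fixes f :: "'a::complete_space \<Rightarrow> real"
  assumes "closed A" "x0 \<in> A" "continuous_on A f" "bdd_below (f ` A)" "e > 0"
    and descent: "\<And>p. p \<in> A \<Longrightarrow> \<not> Q p \<Longrightarrow> \<exists>q\<in>A. q \<noteq> p \<and> f q + e * dist p q \<le> f p"
  obtains p where "p \<in> A" "f p \<le> f x0" "Q p"
proof -
  obtain p where p: "p \<in> A" "f p \<le> f x0"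
    and strict: "\<And>q. q \<in> A \<Longrightarrow> q \<noteq> p \<Longrightarrow> f p - e * dist p q < f q"
    using ekeland_variational_principle[OF assms(1-5)] by blast
  have "Q p"
  proof (rule ccontr)
    assume "\<not> Q p"
    then obtain q where "q \<in> A" "q \<noteq> p" "f q + e * dist p q \<le> f p"
      using descent[OF p(1)] by blast
    then show False
      using strict[of q] by simp
  qed
  with p show thesis
    by (rule that)
qed

section \<open>Sublevel sets with a regular boundary\<close>

lemma eventually_gt_of_directional_derivative:
  fixes g :: "'a::real_normed_vector \<Rightarrow> real"
  assumes "((\<lambda>t. (g (x + t *\<^sub>R v) - g x) / t) \<longlongrightarrow> d) (at 0)" "d' < d"
  shows "eventually (\<lambda>t. g x + d' * t < g (x + t *\<^sub>R v)) (at_right 0)"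
proof -
  have "eventually (\<lambda>t. d' < (g (x + t *\<^sub>R v) - g x) / t) (at_right 0)"
    using order_tendstoD(1)[OF tendsto_mono[OF at_le[OF subset_UNIV] assms(1)] assms(2)] .
  with eventually_at_right_less show ?thesis
    by eventually_elim (simp add: field_simps)
qed

lemma directional_derivative_nonneg:
  fixes g :: "'a::real_normed_vector \<Rightarrow> real"
  assumes "((\<lambda>t. (g (x + t *\<^sub>R v) - g x) / t) \<longlongrightarrow> d) (at 0)"
    and "eventually (\<lambda>t. g x \<le> g (x + t *\<^sub>R v)) (at_right 0)"
  shows "0 \<le> d"
proof (rule tendsto_lowerbound)
  show "((\<lambda>t. (g (x + t *\<^sub>R v) - g x) / t) \<longlongrightarrow> d) (at_right 0)"
    using assms(1) by (rule tendsto_mono[OF at_le[OF subset_UNIV]])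
  show "eventually (\<lambda>t. 0 \<le> (g (x + t *\<^sub>R v) - g x) / t) (at_right 0)"
    using assms(2) eventually_at_right_less by eventually_elim simp
qed simp

lemma continuous_first_crossing:
  fixes \<phi> :: "real \<Rightarrow> real"
  assumes cont: "continuous_on {0..1} \<phi>" and above: "eventually (\<lambda>s. a < \<phi> s) (at_right 0)"
    and "\<phi> 1 \<le> a"
  obtains s where "0 < s" "s \<le> 1" "\<phi> s = a" "\<And>r. 0 < r \<Longrightarrow> r < s \<Longrightarrow> a < \<phi> r"
proof -
  obtain d where "d > 0" and d: "\<And>r. 0 < r \<Longrightarrow> r < d \<Longrightarrow> a < \<phi> r"
    using above by (auto simp: eventually_at_right_field)
  define d1 where "d1 = min (d / 2) 1"
  have d1: "0 < d1" "d1 < d" "d1 \<le> 1"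
    using \<open>d > 0\<close> by (auto simp: d1_def)
  define T where "T = {s \<in> {d1..1}. \<phi> s \<le> a}"
  have "closed T"
    unfolding T_def using d1 by (intro continuous_on_closed_Collect_le continuous_on_subset[OF cont]) auto
  moreover have "1 \<in> T" "bdd_below T"
    using d1 assms(3) by (auto simp: T_def)
  ultimately have "Inf T \<in> T"
    using closed_contains_Inf by blast
  define s where "s = Inf T"
  have s: "d1 \<le> s" "s \<le> 1" "\<phi> s \<le> a"
    using \<open>Inf T \<in> T\<close> by (auto simp: s_def T_def)
  have below: "a < \<phi> r" if "0 < r" "r < s" for r
  proof (cases "r < d1")
    case True
    then show ?thesis using d that d1 by simp
  next
    case False
    then have "r \<notin> T"
      using that cInf_lower[OF _ \<open>bdd_below T\<close>, of r] by (force simp: s_def)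
    then show ?thesis using False that s by (auto simp: T_def)
  qed
  have "a \<le> \<phi> s"
  proof (rule tendsto_lowerbound)
    show "(\<phi> \<longlongrightarrow> \<phi> s) (at_left s)"
      using continuous_on_subset[OF cont, of "{0..s}"] s d1
      by (intro continuous_on_Icc_at_leftD) auto
    show "eventually (\<lambda>r. a \<le> \<phi> r) (at_left s)"
      using eventually_at_left_real[of 0 s] s d1
      by (auto elim!: eventually_mono intro: less_imp_le below)
  qed simp
  with s d1 below show thesis
    by (intro that[of s]) auto
qed

lemma le_dist_add_scaleR:
  fixes n y z :: "'a::real_inner"
  assumes "norm n = 1" "inner n (z - y) \<le> k * (norm (z - y))\<^sup>2" "0 \<le> t" "2 * t * k \<le> 1"
  shows "t \<le> dist (y + t *\<^sub>R n) z"
proof -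
  have "t\<^sup>2 \<le> t\<^sup>2 + (1 - 2 * t * k) * (norm (z - y))\<^sup>2"
    using assms(4) by simp
  also have "\<dots> \<le> t\<^sup>2 - 2 * t * inner n (z - y) + (norm (z - y))\<^sup>2"
    using mult_left_mono[OF assms(2), of "2 * t"] assms(3) by (simp add: algebra_simps)
  also have "\<dots> = (dist (y + t *\<^sub>R n) z)\<^sup>2"
    using dot_norm_neg[of "t *\<^sub>R n" "z - y"] assms(1,3)
    by (simp add: dist_norm algebra_simps)
  finally show ?thesis
    by (rule power2_le_imp_le) simp
qed

lemma le_infdistI:
  assumes "A \<noteq> {}" "\<And>a. a \<in> A \<Longrightarrow> d \<le> dist x a"
  shows "d \<le> infdist x A"
  unfolding infdist_notempty[OF assms(1)] by (rule cINF_greatest) (use assms in auto)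

lemma inner_sgn_self: "inner x (sgn x) = norm x"
  for x :: "'a::real_inner"
  by (cases "x = 0") (simp_all add: sgn_div_norm dot_square_norm power2_eq_square)

locale regular_level =
  fixes g :: "'a::real_inner \<Rightarrow> real" and Dg :: "'a \<Rightarrow> 'a" and c :: real
  assumes continuous: "continuous_on UNIV g"
    and directional_derivative:
      "\<And>x v. ((\<lambda>t. (g (x + t *\<^sub>R v) - g x) / t) \<longlongrightarrow> inner (Dg x) v) (at 0)"
    and c_pos: "0 < c"
    and gradient_lower_bound: "\<And>x. g x = 1 \<Longrightarrow> c \<le> norm (Dg x)"
begin

lemma closed_sublevel: "closed {x. g x \<le> 1}"
  using continuous by (intro closed_Collect_le continuous_intros) auto

lemma ascent_along_gradient:
  assumes "g x = 1" "d < c"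
  shows "eventually (\<lambda>t. 1 + d * t < g (x + t *\<^sub>R sgn (Dg x))) (at_right 0)"
  using eventually_gt_of_directional_derivative[OF directional_derivative, of d x "sgn (Dg x)"]
    gradient_lower_bound[OF assms(1)] assms by (simp add: inner_sgn_self)

lemma ascent_step:
  assumes "g x = 1" "0 < T"
  obtains t where "0 < t" "t < T" "1 + c / 2 * t < g (x + t *\<^sub>R sgn (Dg x))"
proof -
  have "eventually (\<lambda>t. 1 + c / 2 * t < g (x + t *\<^sub>R sgn (Dg x))) (at_right 0)"
    using ascent_along_gradient[OF assms(1), of "c / 2"] c_pos by simp
  moreover have "eventually (\<lambda>t. 0 < t \<and> t < T) (at_right 0)"
    using eventually_at_right_real[OF assms(2)] by simp
  ultimately have "eventually (\<lambda>t. 1 + c / 2 * t < g (x + t *\<^sub>R sgn (Dg x)) \<and> 0 < t \<and> t < T) (at_right 0)"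
    by (rule eventually_conj)
  then show thesis
    using eventually_happens'[of "at_right (0::real)"] that by auto
qed

lemma frontier_sublevel_iff: "x \<in> frontier {x. g x \<le> 1} \<longleftrightarrow> g x = 1"
proof
  assume x: "x \<in> frontier {x. g x \<le> 1}"
  then have "g x \<le> 1"
    using closed_sublevel frontier_subset_closed by blast
  moreover have "\<not> g x < 1"
  proof
    assume "g x < 1"
    moreover have "open {x. g x < 1}"
      using continuous by (intro open_Collect_less continuous_intros) auto
    ultimately have "x \<in> interior {x. g x \<le> 1}"
      by (intro interior_maximal[where T = "{x. g x < 1}", THEN subsetD]) auto
    then show False
      using x by (simp add: frontier_def)
  qed
  ultimately show "g x = 1"
    by simp
next
  assume x: "g x = 1"
  have "x \<notin> interior {x. g x \<le> 1}"
  proof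
    assume "x \<in> interior {x. g x \<le> 1}"
    moreover have "((\<lambda>t. x + t *\<^sub>R sgn (Dg x)) \<longlongrightarrow> x) (at_right 0)"
      by (auto intro!: tendsto_eq_intros)
    ultimately have "eventually (\<lambda>t. x + t *\<^sub>R sgn (Dg x) \<in> interior {x. g x \<le> 1}) (at_right 0)"
      by (intro topological_tendstoD) auto
    moreover have "eventually (\<lambda>t. 1 < g (x + t *\<^sub>R sgn (Dg x))) (at_right 0)"
      using ascent_along_gradient[OF x, of 0] c_pos by simp
    ultimately have "eventually (\<lambda>_. False) (at_right (0::real))"
      by eventually_elim (use interior_subset in fastforce)
    then show False
      by simp
  qed
  then show "x \<in> frontier {x. g x \<le> 1}"
    using x closure_subset[of "{x. g x \<le> 1}"] by (auto simp: frontier_def)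
qed

lemma first_return_to_level:
  assumes gy: "g y = 1" and "0 < inner (Dg y) v" "g (y + v) \<le> 1"
  obtains s where "0 < s" "s \<le> 1" "g (y + s *\<^sub>R v) = 1" "inner (Dg (y + s *\<^sub>R v)) v \<le> 0"
proof -
  have "continuous_on {0..1} (\<lambda>s. g (y + s *\<^sub>R v))"
    by (intro continuous_on_compose2[OF continuous] continuous_intros) auto
  moreover have "eventually (\<lambda>s. 1 < g (y + s *\<^sub>R v)) (at_right 0)"
    using eventually_gt_of_directional_derivative[OF directional_derivative, of 0 y v] assms by simp
  moreover have "g (y + 1 *\<^sub>R v) \<le> 1"
    using assms by simp
  ultimately obtain s where s: "0 < s" "s \<le> 1" "g (y + s *\<^sub>R v) = 1"
    and above: "\<And>r. 0 < r \<Longrightarrow> r < s \<Longrightarrow> 1 < g (y + r *\<^sub>R v)"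
    by (rule continuous_first_crossing) auto
  txt \<open>Walking back from the first return point towards \<open>y\<close>, \<open>g\<close> stays above \<open>1\<close>.\<close>
  have "0 \<le> inner (Dg (y + s *\<^sub>R v)) (- v)"
  proof (rule directional_derivative_nonneg[OF directional_derivative])
    show "eventually (\<lambda>t. g (y + s *\<^sub>R v) \<le> g (y + s *\<^sub>R v + t *\<^sub>R - v)) (at_right 0)"
      using eventually_at_right_real[OF s(1)]
    proof eventually_elim
      case (elim t)
      then have "1 < g (y + (s - t) *\<^sub>R v)"
        by (intro above) auto
      then show ?case
        using s(3) by (simp add: algebra_simps)
    qed
  qed
  with s that show thesis
    by simp
qed

end

locale semiconvex_sublevel = regular_level +
  fixes lam :: real
  assumes lam_pos: "0 < lam"
    and semiconvex: "\<And>x z. x \<in> frontier {x. g x \<le> 1} \<Longrightarrow> g z \<le> 1 \<Longrightarrow>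
      - lam * (norm (x - z))\<^sup>2 \<le> inner (Dg x - Dg z) (x - z)"
begin

lemma tangent_inequality:
  assumes y: "y \<in> frontier {x. g x \<le> 1}" and z: "g z \<le> 1"
  shows "inner (Dg y) (z - y) \<le> lam * (norm (z - y))\<^sup>2"
proof (cases "inner (Dg y) (z - y) \<le> 0")
  case True
  then show ?thesis
    using lam_pos by (intro order_trans[OF True]) simp
next
  case False
  define v where "v = z - y"
  have gy: "g y = 1"
    using y frontier_sublevel_iff by blast
  obtain s where s: "0 < s" "s \<le> 1" and "g (y + s *\<^sub>R v) = 1"
    and "inner (Dg (y + s *\<^sub>R v)) v \<le> 0"
    using first_return_to_level[OF gy, of v] False z by (auto simp: v_def)
  define u where "u = y + s *\<^sub>R v"
  have u: "u \<in> frontier {x. g x \<le> 1}"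
    using \<open>g (y + s *\<^sub>R v) = 1\<close> by (simp add: frontier_sublevel_iff u_def)
  have "s * inner (Dg u) v \<le> 0"
    using s(1) \<open>inner (Dg (y + s *\<^sub>R v)) v \<le> 0\<close> by (simp add: u_def mult_nonneg_nonpos)
  moreover have "s * inner (Dg y) v \<le> s * inner (Dg u) v + lam * (s * norm v)\<^sup>2"
  proof -
    have "- lam * (norm (u - y))\<^sup>2 \<le> inner (Dg u - Dg y) (u - y)"
      using semiconvex[OF u, of y] gy by simp
    moreover have "u - y = s *\<^sub>R v"
      by (simp add: u_def)
    ultimately show ?thesis
      using s(1) by (simp add: inner_diff_left algebra_simps)
  qed
  moreover have "lam * (s * norm v)\<^sup>2 = s * (lam * s * (norm v)\<^sup>2)"
    by (simp add: power2_eq_square mult_ac)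
  ultimately have "s * inner (Dg y) v \<le> s * (lam * s * (norm v)\<^sup>2)"
    by linarith
  then have "inner (Dg y) v \<le> lam * s * (norm v)\<^sup>2"
    using s(1) by simp
  also have "\<dots> \<le> lam * (norm v)\<^sup>2"
    using s(2) lam_pos mult_left_le[of s lam] by (intro mult_right_mono) auto
  finally show ?thesis
    by (simp add: v_def)
qed

lemma exterior_ball:
  assumes y: "y \<in> frontier {x. g x \<le> 1}" and t: "0 \<le> t" "t \<le> c / (2 * lam)"
  shows "t \<le> infdist (y + t *\<^sub>R sgn (Dg y)) {x. g x \<le> 1}"
proof (rule le_infdistI)
  have gy: "g y = 1"
    using y frontier_sublevel_iff by blast
  then have c_le: "c \<le> norm (Dg y)"
    by (rule gradient_lower_bound)
  then have Dy: "Dg y \<noteq> 0"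
    using c_pos by auto
  show "{x. g x \<le> 1} \<noteq> {}"
    using gy by (auto intro!: exI[of _ y])
  fix z assume "z \<in> {x. g x \<le> 1}"
  then have "inner (Dg y) (z - y) / norm (Dg y) \<le> lam * (norm (z - y))\<^sup>2 / norm (Dg y)"
    using tangent_inequality[OF y, of z] by (intro divide_right_mono) auto
  then have "inner (sgn (Dg y)) (z - y) \<le> lam / norm (Dg y) * (norm (z - y))\<^sup>2"
    by (simp add: sgn_div_norm divide_inverse_commute)
  moreover have "2 * t * (lam / norm (Dg y)) \<le> 1"
  proof -
    have "2 * t * lam \<le> c"
      using t lam_pos by (simp add: field_simps)
    also note c_le
    finally show ?thesis
      using Dy by (simp add: field_simps)
  qed
  moreover have "norm (sgn (Dg y)) = 1"
    using Dy by (simp add: norm_sgn)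
  ultimately show "t \<le> dist (y + t *\<^sub>R sgn (Dg y)) z"
    using t(1) by (intro le_dist_add_scaleR)
qed

end

section \<open>Superlevel sets depending on a parameter\<close>

lemma superlevel_parameter_descent:
  fixes F :: "'a::real_inner \<times> real \<Rightarrow> real"
  assumes level: "regular_level (\<lambda>u. F (u, \<tau>)) (DF \<tau>) c"
    and lip: "\<And>u \<theta> \<theta>'. \<bar>F (u, \<theta>) - F (u, \<theta>')\<bar> \<le> M * \<bar>\<theta> - \<theta>'\<bar>"
    and M: "0 < M" and v: "1 \<le> F (v, \<tau>)" and \<tau>: "0 < \<tau>"
  shows "\<exists>v' \<tau>'. 0 \<le> \<tau>' \<and> \<tau>' < \<tau> \<and> 1 \<le> F (v', \<tau>') \<and> norm (v' - v) \<le> 2 * M / c * (\<tau> - \<tau>')"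
proof (cases "F (v, \<tau>) = 1")
  case False
  define h where "h = min \<tau> ((F (v, \<tau>) - 1) / M)"
  have h: "0 < h" "h \<le> \<tau>" "h \<le> (F (v, \<tau>) - 1) / M"
    using False v \<tau> M by (auto simp: h_def)
  then have "M * h \<le> F (v, \<tau>) - 1"
    using M by (simp add: pos_le_divide_eq mult.commute)
  have "1 \<le> F (v, \<tau> - h)"
    using lip[of v \<tau> "\<tau> - h"] h \<open>M * h \<le> F (v, \<tau>) - 1\<close> by simp
  then show ?thesis
    using h regular_level.c_pos[OF level] M by (intro exI[of _ v] exI[of _ "\<tau> - h"]) auto
next
  case True
  txt \<open>On the level set, push along the gradient and pay for it with the parameter.\<close>
  have c: "0 < c"
    using level by (rule regular_level.c_pos)
  define n where "n = sgn (DF \<tau> v)"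
  obtain t where t: "0 < t" "t < 2 * M * \<tau> / c" "1 + c / 2 * t < F (v + t *\<^sub>R n, \<tau>)"
    using regular_level.ascent_step[OF level, of v "2 * M * \<tau> / c"] True c M \<tau> by (auto simp: n_def)
  define h where "h = c * t / (2 * M)"
  have h: "0 < h" "h < \<tau>" "M * h = c / 2 * t"
    using t c M by (auto simp: h_def field_simps)
  have "F (v + t *\<^sub>R n, \<tau>) - F (v + t *\<^sub>R n, \<tau> - h) \<le> M * h"
    using lip[of "v + t *\<^sub>R n" \<tau> "\<tau> - h"] h(1) by (simp add: abs_le_iff)
  then have "1 \<le> F (v + t *\<^sub>R n, \<tau> - h)"
    using t(3) h(3) by linarith
  moreover have "norm (v + t *\<^sub>R n - v) \<le> 2 * M / c * (\<tau> - (\<tau> - h))"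
    using t(1) c M by (simp add: n_def norm_sgn h_def)
  ultimately show ?thesis
    using h by (intro exI[of _ "v + t *\<^sub>R n"] exI[of _ "\<tau> - h"]) auto
qed

lemma parameter_penalty_descent:
  fixes v v' y :: "'a::real_normed_vector"
  assumes v': "norm (v' - v) \<le> \<kappa> * (\<tau> - \<tau>')" and "\<tau>' \<le> \<tau>" "0 < \<kappa>"
  shows "2 * \<kappa> * \<tau>' + norm (v' - y) + \<kappa> / (1 + \<kappa>) * dist (v, \<tau>) (v', \<tau>')
    \<le> 2 * \<kappa> * \<tau> + norm (v - y)"
proof -
  have "dist (v, \<tau>) (v', \<tau>') \<le> dist v v' + dist \<tau> \<tau>'"
    unfolding dist_Pair_Pair by (rule sqrt_sum_squares_le_sum) simp_all
  also have "\<dots> \<le> (1 + \<kappa>) * (\<tau> - \<tau>')"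
    using assms by (simp add: dist_norm norm_minus_commute dist_real_def algebra_simps)
  finally have "\<kappa> / (1 + \<kappa>) * dist (v, \<tau>) (v', \<tau>') \<le> \<kappa> / (1 + \<kappa>) * ((1 + \<kappa>) * (\<tau> - \<tau>'))"
    using assms(3) by (intro mult_left_mono) auto
  also have "\<dots> = \<kappa> * (\<tau> - \<tau>')"
    using assms(3) by simp
  finally have "\<kappa> / (1 + \<kappa>) * dist (v, \<tau>) (v', \<tau>') \<le> \<kappa> * (\<tau> - \<tau>')" .
  moreover have "norm (v' - y) \<le> norm (v - y) + norm (v' - v)"
    using norm_triangle_ineq[of "v - y" "v' - v"] by simp
  ultimately show ?thesis
    using v' by (simp add: algebra_simps)
qed

lemma superlevel_point_along_path:
  fixes F :: "'a::{real_inner,complete_space} \<times> real \<Rightarrow> real"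
  assumes cont: "continuous_on UNIV F"
    and level: "\<And>\<theta>. regular_level (\<lambda>u. F (u, \<theta>)) (DF \<theta>) c"
    and lip: "\<And>u \<theta> \<theta>'. \<bar>F (u, \<theta>) - F (u, \<theta>')\<bar> \<le> M * \<bar>\<theta> - \<theta>'\<bar>"
    and y: "1 \<le> F (y, 1)"
  shows "\<exists>v. norm (v - y) \<le> 4 * M / c \<and> 1 \<le> F (v, 0)"
proof (cases "M = 0")
  case True
  then show ?thesis
    using lip[of y 0 1] y by (intro exI[of _ y]) simp
next
  case False
  moreover have "0 \<le> M"
    using lip[of y 0 1] by simp
  ultimately have M: "0 < M"
    by simp
  have c: "0 < c"
    using level by (rule regular_level.c_pos)
  define \<kappa> where "\<kappa> = 2 * M / c"
  have \<kappa>: "0 < \<kappa>"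
    using M c by (simp add: \<kappa>_def)
  define A where "A = {p. 0 \<le> snd p \<and> snd p \<le> 1 \<and> 1 \<le> F p}"
  txt \<open>The parameter is weighted by \<open>2 * \<kappa>\<close>, twice the speed \<open>\<kappa>\<close> at which a descent step
    moves the point, so every descent step lowers \<open>f\<close> by a fixed fraction of its length.\<close>
  define f where "f p = 2 * \<kappa> * snd p + norm (fst p - y)" for p
  have "closed A"
    unfolding A_def using cont by (intro closed_Collect_conj closed_Collect_le continuous_intros) auto
  moreover have "(y, 1) \<in> A"
    using y by (simp add: A_def)
  moreover have "continuous_on A f"
    unfolding f_def by (intro continuous_intros)
  moreover have "bdd_below (f ` A)"
    using \<kappa> by (intro bdd_belowI2[of _ 0]) (simp add: A_def f_def)
  moreover have "0 < \<kappa> / (1 + \<kappa>)"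
    using \<kappa> by simp
  moreover have "\<exists>q\<in>A. q \<noteq> p \<and> f q + \<kappa> / (1 + \<kappa>) * dist p q \<le> f p"
    if p: "p \<in> A" "snd p \<noteq> 0" for p
  proof -
    obtain v \<tau> where p_eq: "p = (v, \<tau>)"
      by fastforce
    moreover have "1 \<le> F (v, \<tau>)" "0 < \<tau>"
      using p by (auto simp: A_def p_eq)
    ultimately obtain v' \<tau>' where q: "0 \<le> \<tau>'" "\<tau>' < \<tau>" "1 \<le> F (v', \<tau>')"
      and v': "norm (v' - v) \<le> \<kappa> * (\<tau> - \<tau>')"
      using superlevel_parameter_descent[where F = F and DF = DF and c = c and M = M and \<tau> = \<tau> and v = v,
          OF level lip M] by (auto simp: \<kappa>_def)
    have "f (v', \<tau>') + \<kappa> / (1 + \<kappa>) * dist p (v', \<tau>') \<le> f p"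
      using parameter_penalty_descent[OF v' less_imp_le[OF q(2)] \<kappa>, of y] by (simp add: f_def p_eq)
    then show ?thesis
      using p q by (intro bexI[of _ "(v', \<tau>')"]) (auto simp: A_def p_eq)
  qed
  ultimately obtain p where "p \<in> A" "f p \<le> f (y, 1)" "snd p = 0"
    by (rule ekeland_descent) blast
  then show ?thesis
    by (intro exI[of _ "fst p"]) (cases p, auto simp: A_def f_def \<kappa>_def)
qed

section \<open>Distance to the boundary under perturbation\<close>

lemma continuous_on_if_locally_lipschitz:
  assumes "locally_lipschitz f"
  shows "continuous_on UNIV f"
proof -
  have "isCont f p" for p
  proof -
    obtain e C where "e > 0" "C-lipschitz_on (ball p e) f"
      using assms unfolding locally_lipschitz_def by blast
    then show ?thesis
      using lipschitz_on_continuous_on continuous_on_interior by fastforce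
  qed
  then show ?thesis
    by (simp add: continuous_at_imp_continuous_on)
qed

lemma infdist_le_hausdorff_dist:
  assumes "z \<in> A"
  shows "ereal (infdist z B) \<le> hausdorff_dist A B" "ereal (infdist z B) \<le> hausdorff_dist B A"
  using assms unfolding hausdorff_dist_def by (auto intro: max.coboundedI1 max.coboundedI2 SUP_upper)

lemma ball_infdist_frontier_subset_interior:
  fixes S :: "'a::real_normed_vector set"
  assumes "x \<in> S"
  shows "ball x (infdist x (frontier S)) \<subseteq> interior S"
proof (cases "0 < infdist x (frontier S)")
  case False
  then have "ball x (infdist x (frontier S)) = {}"
    by simp
  then show ?thesis
    by (metis empty_subsetI)
next
  case True
  have "ball x (infdist x (frontier S)) \<inter> frontier S = {}"
    using infdist_le[of _ "frontier S" x] by force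
  moreover have "x \<in> ball x (infdist x (frontier S))"
    using True by simp
  ultimately have "ball x (infdist x (frontier S)) \<subseteq> S"
    using connected_Int_frontier[OF connected_ball, of x "infdist x (frontier S)" S] assms by blast
  then show ?thesis
    by (intro interior_maximal) auto
qed

locale sublevel_family =
  fixes G :: "'x::{real_inner,complete_space} \<times> 'w::real_normed_vector \<Rightarrow> real"
    and gradG :: "'x \<Rightarrow> 'w \<Rightarrow> 'x" and c lam L :: real
  assumes continuous: "continuous_on UNIV G"
    and directional_derivative:
      "\<And>x w v. ((\<lambda>t. (G (x + t *\<^sub>R v, w) - G (x, w)) / t) \<longlongrightarrow> inner (gradG x w) v) (at 0)"
    and c_pos: "0 < c"
    and gradient_lower_bound: "\<And>x w. G (x, w) = 1 \<Longrightarrow> c \<le> norm (gradG x w)"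
    and lam_pos: "0 < lam"
    and semiconvex: "\<And>x z w. x \<in> frontier (Zset G w) \<Longrightarrow> z \<in> Zset G w \<Longrightarrow>
      - lam * (norm (x - z))\<^sup>2 \<le> inner (gradG x w - gradG z w) (x - z)"
    and lipschitz_parameter: "\<And>x w w'. \<bar>G (x, w) - G (x, w')\<bar> \<le> L * norm (w - w')"
begin

lemma semiconvex_sublevel_fiber: "semiconvex_sublevel (\<lambda>x. G (x, w)) (\<lambda>x. gradG x w) c lam"
proof unfold_locales
  show "continuous_on UNIV (\<lambda>x. G (x, w))"
    by (intro continuous_on_compose2[OF continuous] continuous_intros) auto
qed (use directional_derivative c_pos gradient_lower_bound lam_pos semiconvex in \<open>auto simp: Zset_def\<close>)

lemma frontier_Zset_iff: "x \<in> frontier (Zset G w) \<longleftrightarrow> G (x, w) = 1"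
proof -
  interpret semiconvex_sublevel "\<lambda>x. G (x, w)" "\<lambda>x. gradG x w" c lam
    by (rule semiconvex_sublevel_fiber)
  show ?thesis
    using frontier_sublevel_iff by (simp add: Zset_def)
qed

lemma superlevel_point_nearby:
  assumes "1 \<le> G (y, a)"
  shows "\<exists>v. norm (v - y) \<le> 4 * L * norm (a - b) / c \<and> 1 \<le> G (v, b)"
proof -
  define w where "w \<theta> = b + \<theta> *\<^sub>R (a - b)" for \<theta> :: real
  define F where "F p = G (fst p, w (snd p))" for p
  have "continuous_on UNIV F"
    unfolding F_def w_def by (intro continuous_on_compose2[OF continuous] continuous_intros) auto
  moreover have "regular_level (\<lambda>u. F (u, \<theta>)) (\<lambda>u. gradG u (w \<theta>)) c" for \<theta>
    using semiconvex_sublevel.axioms(1)[OF semiconvex_sublevel_fiber] by (simp add: F_def)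
  moreover have "\<bar>F (u, \<theta>) - F (u, \<theta>')\<bar> \<le> L * norm (a - b) * \<bar>\<theta> - \<theta>'\<bar>" for u \<theta> \<theta>'
  proof -
    have "w \<theta> - w \<theta>' = (\<theta> - \<theta>') *\<^sub>R (a - b)"
      by (simp add: w_def algebra_simps)
    then show ?thesis
      using lipschitz_parameter[of u "w \<theta>" "w \<theta>'"] by (simp add: F_def mult_ac)
  qed
  moreover have "1 \<le> F (y, 1)"
    using assms by (simp add: F_def w_def)
  ultimately show ?thesis
    using superlevel_point_along_path[of F "\<lambda>\<theta> u. gradG u (w \<theta>)" c "L * norm (a - b)" y]
    by (simp add: F_def w_def mult.assoc)
qed

lemma frontier_Zset_nonempty:
  assumes "frontier (Zset G w) \<noteq> {}" "Zset G w' \<noteq> {}"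
  shows "frontier (Zset G w') \<noteq> {}"
proof -
  obtain y where "G (y, w) = 1"
    using assms(1) frontier_Zset_iff by blast
  then obtain v where v: "1 \<le> G (v, w')"
    using superlevel_point_nearby[of y w w'] by auto
  show ?thesis
  proof (cases "G (v, w') = 1")
    case True
    then show ?thesis
      using frontier_Zset_iff by blast
  next
    case False
    then have "v \<notin> Zset G w'"
      using v by (simp add: Zset_def)
    then show ?thesis
      using assms(2) frontier_eq_empty by blast
  qed
qed

lemma ball_subset_interior_Zset_radius_le:
  assumes ball: "ball u s \<subseteq> interior (Zset G w)" and u: "1 \<le> G (u, w')"
  shows "s \<le> 4 * L * norm (w - w') / c"
proof -
  obtain v where v: "norm (v - u) \<le> 4 * L * norm (w' - w) / c" "1 \<le> G (v, w)"
    using superlevel_point_nearby[OF u] by blast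
  have "v \<notin> interior (Zset G w)"
  proof
    assume v_int: "v \<in> interior (Zset G w)"
    then have "G (v, w) \<le> 1"
      using interior_subset by (force simp: Zset_def)
    with v(2) have "v \<in> frontier (Zset G w)"
      by (simp add: frontier_Zset_iff)
    with v_int show False
      by (simp add: frontier_def)
  qed
  then have "s \<le> dist u v"
    using ball by (auto simp: subset_eq)
  then show ?thesis
    using v(1) by (simp add: dist_norm norm_minus_commute)
qed

lemma infdist_frontier_le_dist:
  assumes small: "4 * L * norm (w - w') / c < c / (2 * lam)"
    and x: "x \<in> Zset G w" and y': "y' \<in> frontier (Zset G w')"
    and h: "\<And>z. z \<in> Zset G w \<Longrightarrow> infdist z (Zset G w') \<le> h"
  shows "infdist x (frontier (Zset G w)) \<le> dist x y' + h"
proof (rule ccontr)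
  define s where "s = infdist x (frontier (Zset G w)) - dist x y'"
  assume "\<not> ?thesis"
  then have "h < s"
    by (simp add: s_def)
  have "0 \<le> h"
    using h[OF x] infdist_nonneg[of x "Zset G w'"] by linarith
  have "ball y' s \<subseteq> ball x (infdist x (frontier (Zset G w)))"
  proof
    fix u assume "u \<in> ball y' s"
    then show "u \<in> ball x (infdist x (frontier (Zset G w)))"
      using dist_triangle[of x u y'] by (simp add: s_def)
  qed
  with ball_infdist_frontier_subset_interior[OF x]
  have ball_y': "ball y' s \<subseteq> interior (Zset G w)"
    by blast
  then have "s < c / (2 * lam)"
    using ball_subset_interior_Zset_radius_le[of y' s w w'] y' small by (simp add: frontier_Zset_iff)
  define t where "t = (h + s) / 2"
  define q where "q = y' + t *\<^sub>R sgn (gradG y' w')"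
  have t: "0 \<le> t" "t \<le> c / (2 * lam)" "h < t" "t < s"
    using \<open>0 \<le> h\<close> \<open>h < s\<close> \<open>s < c / (2 * lam)\<close> by (auto simp: t_def)
  interpret semiconvex_sublevel "\<lambda>x. G (x, w')" "\<lambda>x. gradG x w'" c lam
    by (rule semiconvex_sublevel_fiber)
  have "t \<le> infdist q (Zset G w')"
    using exterior_ball[of y' t] y' t by (simp add: q_def Zset_def)
  moreover have "q \<in> ball y' s"
    using y' t gradient_lower_bound frontier_Zset_iff c_pos
    by (auto simp: q_def dist_norm norm_sgn)
  then have "infdist q (Zset G w') \<le> h"
    using ball_y' interior_subset h by blast
  ultimately show False
    using t(3) by linarith
qed

lemma infdist_frontier_le:
  assumes small: "4 * L * norm (w - w') / c < c / (2 * lam)"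
    and x: "x \<in> Zset G w" and x': "x' \<in> Zset G w'"
    and h: "\<And>z. z \<in> Zset G w \<Longrightarrow> infdist z (Zset G w') \<le> h"
  shows "infdist x (frontier (Zset G w)) \<le> dist x x' + infdist x' (frontier (Zset G w')) + h"
proof (cases "frontier (Zset G w) = {}")
  case True
  then have "infdist x (frontier (Zset G w)) = 0"
    by (simp add: infdist_def)
  then show ?thesis
    using h[OF x] infdist_nonneg[of x "Zset G w'"] infdist_nonneg[of x' "frontier (Zset G w')"]
      zero_le_dist[of x x'] by linarith
next
  case False
  then have "frontier (Zset G w') \<noteq> {}"
    using frontier_Zset_nonempty[of w w'] x' by blast
  moreover have "infdist x (frontier (Zset G w)) - h \<le> dist x y'" if "y' \<in> frontier (Zset G w')" for y'
    using infdist_frontier_le_dist[OF small x that h] by simp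
  ultimately have "infdist x (frontier (Zset G w)) - h \<le> infdist x (frontier (Zset G w'))"
    by (rule le_infdistI)
  then show ?thesis
    using infdist_triangle[of x "frontier (Zset G w')" x'] by simp
qed

lemma infdist_frontier_diff_le:
  assumes small: "4 * L * norm (w - w') / c < c / (2 * lam)"
    and x: "x \<in> Zset G w" and x': "x' \<in> Zset G w'"
  shows "ereal \<bar>infdist x (frontier (Zset G w)) - infdist x' (frontier (Zset G w'))\<bar>
    \<le> ereal (norm (x - x')) + hausdorff_dist (Zset G w) (Zset G w')"
proof (cases "hausdorff_dist (Zset G w) (Zset G w') = \<infinity>")
  case True
  then show ?thesis
    by simp
next
  case False
  have "ereal 0 \<le> hausdorff_dist (Zset G w) (Zset G w')"
    using infdist_le_hausdorff_dist(1)[OF x, of "Zset G w'"] infdist_nonneg[of x "Zset G w'"]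
    by (metis ereal_less_eq(3) order_trans)
  with False obtain h where H: "hausdorff_dist (Zset G w) (Zset G w') = ereal h"
    by (cases "hausdorff_dist (Zset G w) (Zset G w')") auto
  have "infdist z (Zset G w') \<le> h" if "z \<in> Zset G w" for z
    using infdist_le_hausdorff_dist(1)[OF that, of "Zset G w'"] H by simp
  from infdist_frontier_le[OF small x x' this]
  have "infdist x (frontier (Zset G w)) \<le> norm (x - x') + infdist x' (frontier (Zset G w')) + h"
    by (simp add: dist_norm)
  moreover have "infdist z (Zset G w) \<le> h" if "z \<in> Zset G w'" for z
    using infdist_le_hausdorff_dist(2)[OF that, of "Zset G w"] H by simp
  from infdist_frontier_le[OF _ x' x this] small
  have "infdist x' (frontier (Zset G w')) \<le> norm (x - x') + infdist x (frontier (Zset G w)) + h"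
    by (simp add: dist_norm norm_minus_commute)
  ultimately show ?thesis
    using H by (simp add: abs_le_iff)
qed

end

theorem lemma2p5:
  fixes G :: "'x::{real_inner,complete_space} \<times> 'w::banach \<Rightarrow> real"
    and gradG :: "'x \<Rightarrow> 'w \<Rightarrow> 'x"
    and lam c L :: real
    and \<mu>1 :: "'w \<Rightarrow> real \<Rightarrow> real"
    and \<mu>2 :: "real \<Rightarrow> real"
    and K :: real
  assumes G_nonneg: "\<And>p. G p \<ge> 0"
    and G_loclip: "locally_lipschitz G"
    and grad: "\<And>x w y. ((\<lambda>t. (G (x + t *\<^sub>R y, w) - G (x, w)) / t)
                         \<longlongrightarrow> inner (gradG x w) y) (at 0)"
    and consts_pos: "lam > 0" "c > 0" "L > 0"
    and \<mu>1_nonneg: "\<And>w s. s \<ge> 0 \<Longrightarrow> \<mu>1 w s \<ge> 0"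
    and \<mu>2_nonneg: "\<And>s. s \<ge> 0 \<Longrightarrow> \<mu>2 s \<ge> 0"
    and \<mu>1_0: "\<And>w. \<mu>1 w 0 = 0"
    and \<mu>2_0: "\<mu>2 0 = 0"
    and \<mu>1_lim: "\<And>w. filterlim (\<mu>1 w) at_top at_top"
    and \<mu>2_lim: "filterlim \<mu>2 at_top at_top"
    and H1: "\<And>x w. G (x, w) = 1 \<Longrightarrow> norm (gradG x w) \<ge> c"
    and H2: "\<And>x y w. x \<in> Zset G w \<Longrightarrow> y \<in> Zset G w \<Longrightarrow>
               norm (gradG x w - gradG y w) \<le> \<mu>1 w (norm (x - y))"
    and H3: "\<And>x z w. x \<in> frontier (Zset G w) \<Longrightarrow> z \<in> Zset G w \<Longrightarrow>
               inner (gradG x w - gradG z w) (x - z) \<ge> - lam * (norm (x - z))\<^sup>2"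
    and H4: "\<And>x w w'. \<bar>G (x, w) - G (x, w')\<bar> \<le> L * norm (w - w')"
    and H5: "\<And>x w \<rho>. \<rho> > 0 \<Longrightarrow> infdist x (Zset G w) \<ge> \<rho> \<Longrightarrow> G (x, w) - 1 \<ge> \<mu>2 \<rho>"
    and K_pos: "K > 0"
  shows "\<exists>mK>0. \<forall>w w' x x'. max (norm w) (norm w') \<le> K \<longrightarrow> norm (w - w') < mK \<longrightarrow>
           x \<in> Zset G w \<longrightarrow> x' \<in> Zset G w' \<longrightarrow>
           ereal \<bar>infdist x (frontier (Zset G w)) - infdist x' (frontier (Zset G w'))\<bar>
             \<le> ereal (norm (x - x')) + hausdorff_dist (Zset G w) (Zset G w')"
proof -
  interpret sublevel_family G gradG c lam L
    using continuous_on_if_locally_lipschitz[OF G_loclip] grad consts_pos H1 H3 H4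
    by unfold_locales auto
  define mK where "mK = c\<^sup>2 / (8 * lam * L)"
  have small: "4 * L * norm (w - w') / c < c / (2 * lam)" if "norm (w - w') < mK" for w w' :: 'w
  proof -
    have "4 * L * norm (w - w') / c < 4 * L * mK / c"
      using that consts_pos by (simp add: divide_strict_right_mono)
    also have "4 * L * mK / c = c / (2 * lam)"
      using consts_pos by (simp add: mK_def field_simps power2_eq_square)
    finally show ?thesis .
  qed
  have "0 < mK"
    using consts_pos by (simp add: mK_def)
  with small infdist_frontier_diff_le show ?thesis
    by blast
qed

end
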